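(* Consider the system of ordinary differential equations \[ \dot u=r_{1}u(1-u)-a_{12}uv-a_{13}uw,\qquad \dot v=r_{2}v(1-v)+a_{21}uv,\qquad \dot w=-\mu w+a_{31}uw, \] with all parameters $r_1,r_2,\mu,a_{12},a_{13},a_{21},a_{31}$ positive. Assume $r_{1}>a_{12}$ and $\mu\ge a_{31}u^*_{12}$, where \[ u^*_{12}=\frac{r_{2}(r_{1}-a_{12})}{r_{1}r_{2}+a_{12}a_{21}},\qquad v^*_{12}=\frac{r_{1}r_{2}+r_{1}a_{21}}{r_{1}r_{2}+a_{12}a_{21}}. \] Then the equilibrium $E_{12}=(u^*_{12},v^*_{12},0)$ exists (lies in the nonnegative orthant with $u^*_{12},v^*_{12}>0$) and it is globally asymptotically stable, i.e. it is stable and every solution with $u(0)>0$, $v(0)>0$, $w(0)\ge 0$ converges to $E_{12}$ as $t\to\infty$.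
   Context: $u,v,w$ denote population densities of three species; solutions are considered in the nonnegative orthant. *)

theory Defs
  imports "HOL-Analysis.Analysis"
begin

text \<open>Parameters are bundled as (r1, r2, mu, a12, a13, a21, a31).\<close>

type_synonym params = "real \<times> real \<times> real \<times> real \<times> real \<times> real \<times> real"

definition field :: "params \<Rightarrow> real \<times> real \<times> real \<Rightarrow> real \<times> real \<times> real" where
  "field p x = (case p of (r1, r2, mu, a12, a13, a21, a31) \<Rightarrow>
     (case x of (u, v, w) \<Rightarrow>
       (r1 * u * (1 - u) - a12 * u * v - a13 * u * w,
        r2 * v * (1 - v) + a21 * u * v,
        - mu * w + a31 * u * w)))"

definition is_solution :: "params \<Rightarrow> (real \<Rightarrow> real \<times> real \<times> real) \<Rightarrow> bool" where
  "is_solution p x \<longleftrightarrow>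
     (\<forall>t\<ge>0. (x has_vector_derivative field p (x t)) (at t within {0..}))"

definition nonneg_orthant :: "(real \<times> real \<times> real) set" where
  "nonneg_orthant = {(u, v, w). u \<ge> 0 \<and> v \<ge> 0 \<and> w \<ge> 0}"

definition stable :: "params \<Rightarrow> real \<times> real \<times> real \<Rightarrow> bool" where
  "stable p E \<longleftrightarrow>
     (\<forall>\<epsilon>>0. \<exists>\<delta>>0. \<forall>x. is_solution p x \<and> x 0 \<in> nonneg_orthant \<and> dist (x 0) E < \<delta>
        \<longrightarrow> (\<forall>t\<ge>0. dist (x t) E < \<epsilon>))"

definition globally_asymptotically_stable :: "params \<Rightarrow> real \<times> real \<times> real \<Rightarrow> bool" where
  "globally_asymptotically_stable p E \<longleftrightarrow>
     stable p E \<and>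
     (\<forall>x. is_solution p x \<and> fst (x 0) > 0 \<and> fst (snd (x 0)) > 0 \<and> snd (snd (x 0)) \<ge> 0
        \<longrightarrow> (x \<longlongrightarrow> E) at_top)"

end

theory Submission
  imports Defs
begin

(* Lyapunov's direct method with the Goh--Volterra function
     lyap (u, v, w) = volterra us u + c1 * volterra vs v + c2 * w,  volterra s z = z - s - s ln (z / s).
   Along solutions with u, v > 0 its derivative is -r1 (u - us)^2 - c1 r2 (v - vs)^2 - k w with
   k >= 0, which is exactly the hypothesis mu >= a31 us.  Hence lyap is nonincreasing; as it is
   continuous at E = (us, vs, 0), vanishes there and is small only near E, E is stable.
   Sublevel sets of lyap are bounded, so the dissipation r1 (u - us)^2 + c1 r2 (v - vs)^2 is
   Lipschitz in time, and a Barbalat-type argument drives it to 0: u -> us and v -> vs.  Then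
   w -> L / c2 where L = lim lyap, and L > 0 is impossible since the u-equation would eventually
   give u' <= -q < 0 while u stays positive. *)

definition volterra :: "real \<Rightarrow> real \<Rightarrow> real" where
  "volterra s z = z - s - s * ln (z / s)"

(* The tangent line of volterra s at z0, lowered by volterra s z0 >= 0. *)
lemma volterra_ge_linear:
  assumes s: "0 < s" and z: "0 < z" and z0: "0 < z0"
  shows "(z0 - s) * (z - z0) / z0 \<le> volterra s z"
proof -
  have "ln (z / s) = ln (z / z0) + ln (z0 / s)"
    using s z z0 by (simp add: ln_div)
  also have "\<dots> \<le> (z / z0 - 1) + (z0 / s - 1)"
    using s z z0 by (intro add_mono ln_le_minus_one) auto
  finally have "s * ln (z / s) \<le> s * ((z / z0 - 1) + (z0 / s - 1))"
    using s by (simp add: mult_left_mono)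
  moreover have "(z0 - s) * (z - z0) / z0 = z - s - s * ((z / z0 - 1) + (z0 / s - 1))"
    using s z0 by (simp add: field_simps)
  ultimately show ?thesis unfolding volterra_def by linarith
qed

lemma volterra_nonneg: "0 < s \<Longrightarrow> 0 < z \<Longrightarrow> 0 \<le> volterra s z"
  using volterra_ge_linear[of s z s] by simp

lemma volterra_self: "0 < s \<Longrightarrow> volterra s s = 0"
  by (simp add: volterra_def)

lemma le_volterra_linear:
  assumes "0 < s" "0 < z"
  shows "z \<le> 2 * s + 2 * volterra s z"
proof -
  have "(2 * s - s) * (z - 2 * s) / (2 * s) = (z - 2 * s) / 2"
    using assms by simp
  then show ?thesis
    using volterra_ge_linear[of s z "2 * s"] assms by simp
qed

lemma volterra_ge_square:
  assumes s: "0 < s" and z: "0 < z" and e: "0 < e" "e \<le> s" and far: "e \<le> \<bar>z - s\<bar>"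
  shows "e\<^sup>2 / (6 * s) \<le> volterra s z"
proof (cases "s \<le> z")
  case True
  have "e\<^sup>2 / (6 * s) \<le> (e / 2) * (e / 2) / (s + e / 2)"
    using s e by (simp add: field_simps power2_eq_square)
  also have "\<dots> \<le> (e / 2) * (z - (s + e / 2)) / (s + e / 2)"
    using True far s e by (intro divide_right_mono mult_left_mono) auto
  also have "\<dots> \<le> volterra s z"
    using volterra_ge_linear[of s z "s + e / 2"] s z e by simp
  finally show ?thesis .
next
  case False
  have "e\<^sup>2 / (6 * s) \<le> (e / 2) * (e / 2) / (s - e / 2)"
    using s e by (simp add: field_simps power2_eq_square)
  also have "\<dots> \<le> (e / 2) * ((s - e / 2) - z) / (s - e / 2)"
    using False far s e by (intro divide_right_mono mult_left_mono) auto
  also have "\<dots> = (s - e / 2 - s) * (z - (s - e / 2)) / (s - e / 2)"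
    by (simp add: algebra_simps)
  also have "\<dots> \<le> volterra s z"
    using volterra_ge_linear[of s z "s - e / 2"] s z e by simp
  finally show ?thesis .
qed

lemma volterra_small_imp_near:
  assumes "0 < s" "0 < e"
  obtains m where "0 < m" "\<And>z. 0 < z \<Longrightarrow> volterra s z < m \<Longrightarrow> \<bar>z - s\<bar> < e"
proof
  define e' where "e' = min e s"
  show "0 < e'\<^sup>2 / (6 * s)"
    using assms by (simp add: e'_def)
  fix z assume "0 < z" "volterra s z < e'\<^sup>2 / (6 * s)"
  then show "\<bar>z - s\<bar> < e"
    using volterra_ge_square[of s z e'] assms by (force simp: e'_def)
qed

lemma has_real_derivative_volterra:
  assumes "(f has_real_derivative f') (at t within S)" "0 < s" "0 < f t"
  shows "((\<lambda>t. volterra s (f t)) has_real_derivative (1 - s / f t) * f') (at t within S)"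
  unfolding volterra_def using assms
  by (auto intro!: derivative_eq_intros simp: field_simps)

lemma isCont_volterra:
  assumes "isCont f a" "0 < s" "0 < f a"
  shows "isCont (\<lambda>x. volterra s (f x)) a"
  unfolding volterra_def using assms by (auto intro!: continuous_intros)

lemma at_within_Ici_eq_at: "0 < t \<Longrightarrow> at t within {0..} = at (t::real)"
  by (rule at_within_interior) simp

lemma continuous_on_Ici_if_DERIV:
  fixes f f' :: "real \<Rightarrow> real"
  assumes "\<And>t. 0 \<le> t \<Longrightarrow> (f has_real_derivative f' t) (at t within {0..})"
  shows "continuous_on {0..} f"
  unfolding continuous_on_eq_continuous_within using assms DERIV_continuous by (metis atLeast_iff)

lemma DERIV_le_imp_diff_le:
  fixes f f' :: "real \<Rightarrow> real"
  assumes f: "\<And>t. 0 \<le> t \<Longrightarrow> (f has_real_derivative f' t) (at t within {0..})"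
    and ab: "0 \<le> a" "a \<le> b" and le: "\<And>t. a < t \<Longrightarrow> t < b \<Longrightarrow> f' t \<le> c"
  shows "f b - f a \<le> c * (b - a)"
proof -
  have "continuous_on {a..b} f"
    using continuous_on_Ici_if_DERIV[OF f]
    by (rule continuous_on_subset) (use ab in auto)
  then have cont: "continuous_on {a..b} (\<lambda>t. f t - c * t)"
    by (intro continuous_intros)
  have "(\<lambda>t. f t - c * t) b \<le> (\<lambda>t. f t - c * t) a"
  proof (rule DERIV_nonpos_imp_decreasing_open[OF ab(2) _ cont])
    fix t assume t: "a < t" "t < b"
    then have "(f has_real_derivative f' t) (at t)"
      using f[of t] ab at_within_Ici_eq_at[of t] by simp
    then show "\<exists>y. ((\<lambda>t. f t - c * t) has_real_derivative y) (at t) \<and> y \<le> 0"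
      using le[OF t] by (intro exI[of _ "f' t - c"]) (auto intro!: derivative_eq_intros)
  qed
  then show ?thesis by (simp add: algebra_simps)
qed

lemma linear_ode_solution:
  fixes y g :: "real \<Rightarrow> real"
  assumes g: "continuous_on {0..} g"
    and y: "\<And>t. 0 \<le> t \<Longrightarrow> (y has_real_derivative y t * g t) (at t within {0..})"
    and T: "0 \<le> T"
  shows "y T = y 0 * exp (integral {0..T} g)"
proof -
  define G where "G t = integral {0..t} g" for t
  have gT: "continuous_on {0..T} g"
    using g by (rule continuous_on_subset) auto
  have "\<exists>c. \<forall>t\<in>{0..T}. y t * exp (- G t) = c"
  proof (rule has_field_derivative_zero_constant)
    fix t assume t: "t \<in> {0..T}"
    have "(y has_real_derivative y t * g t) (at t within {0..T})"
      using y[of t] t by (auto elim: DERIV_subset)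
    then show "((\<lambda>t. y t * exp (- G t)) has_real_derivative 0) (at t within {0..T})"
      using integral_has_real_derivative[OF gT t] unfolding G_def
      by (auto intro!: derivative_eq_intros simp: algebra_simps)
  qed simp
  then have "y T * exp (- G T) = y 0 * exp (- G 0)"
    using T by force
  then show ?thesis
    by (simp add: G_def exp_minus field_simps)
qed

lemma has_vector_derivative_components:
  fixes x :: "real \<Rightarrow> real \<times> real \<times> real"
  assumes "(x has_vector_derivative (a, b, c)) F"
  shows "((\<lambda>t. fst (x t)) has_real_derivative a) F"
    and "((\<lambda>t. fst (snd (x t))) has_real_derivative b) F"
    and "((\<lambda>t. snd (snd (x t))) has_real_derivative c) F"
proof -
  have x: "(x has_derivative (\<lambda>h. h *\<^sub>R (a, b, c))) F"
    using assms by (simp add: has_vector_derivative_def)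
  have "(\<lambda>h. fst (h *\<^sub>R (a, b, c))) = (*) a"
    "(\<lambda>h. fst (snd (h *\<^sub>R (a, b, c)))) = (*) b"
    "(\<lambda>h. snd (snd (h *\<^sub>R (a, b, c)))) = (*) c"
    by (simp_all add: fun_eq_iff)
  then show "((\<lambda>t. fst (x t)) has_real_derivative a) F"
    and "((\<lambda>t. fst (snd (x t))) has_real_derivative b) F"
    and "((\<lambda>t. snd (snd (x t))) has_real_derivative c) F"
    using has_derivative_fst[OF x] has_derivative_fst[OF has_derivative_snd[OF x]]
      has_derivative_snd[OF has_derivative_snd[OF x]]
    by (simp_all only: has_field_derivative_def)
qed

lemma antitone_bounded_below_tendsto:
  fixes V :: "real \<Rightarrow> real"
  assumes anti: "\<And>s t. 0 \<le> s \<Longrightarrow> s \<le> t \<Longrightarrow> V t \<le> V s"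
    and bdd: "\<And>t. 0 \<le> t \<Longrightarrow> B \<le> V t"
  obtains L where "(V \<longlongrightarrow> L) at_top" "\<And>t. 0 \<le> t \<Longrightarrow> L \<le> V t"
proof (rule that)
  define L where "L = Inf (V ` {0..})"
  have bdd_V: "bdd_below (V ` {0..})"
    using bdd by (auto intro!: bdd_belowI[of _ B])
  show L_le: "L \<le> V t" if "0 \<le> t" for t
    unfolding L_def using that bdd_V by (auto intro!: cInf_lower)
  show "(V \<longlongrightarrow> L) at_top"
  proof (rule decreasing_tendsto)
    show "\<forall>\<^sub>F t in at_top. L \<le> V t"
      using eventually_ge_at_top[of 0] by eventually_elim (rule L_le)
  next
    fix y assume "L < y"
    then obtain t0 where t0: "0 \<le> t0" "V t0 < y"
      using cInf_lessD[of "V ` {0..}" y] unfolding L_def by auto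
    show "\<forall>\<^sub>F t in at_top. V t < y"
      using eventually_ge_at_top[of t0]
    proof eventually_elim
      case (elim t)
      then show ?case using anti[of t0 t] t0 by simp
    qed
  qed
qed

(* Barbalat-type argument: each excursion g >= e lasts at least e / (2 M) and costs V at least
   e^2 / (4 M), which the convergent V can afford only finitely often. *)
lemma lyapunov_dissipation_tendsto_zero:
  fixes V V' g :: "real \<Rightarrow> real"
  assumes V: "\<And>t. 0 \<le> t \<Longrightarrow> (V has_real_derivative V' t) (at t within {0..})"
    and V'_le: "\<And>t. 0 < t \<Longrightarrow> V' t \<le> - g t"
    and V_bdd: "\<And>t. 0 \<le> t \<Longrightarrow> B \<le> V t"
    and g_nonneg: "\<And>t. 0 \<le> t \<Longrightarrow> 0 \<le> g t"
    and g_lip: "\<And>s t. 0 \<le> s \<Longrightarrow> s \<le> t \<Longrightarrow> g s - g t \<le> M * (t - s)"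
    and M: "0 < M"
  shows "(g \<longlongrightarrow> 0) at_top"
proof (rule ccontr)
  assume "\<not> (g \<longlongrightarrow> 0) at_top"
  then obtain e where e: "0 < e" and not_ev: "\<not> (\<forall>\<^sub>F t in at_top. dist (g t) 0 < e)"
    by (metis tendstoI)
  have anti: "V t \<le> V s" if st: "0 \<le> s" "s \<le> t" for s t
  proof -
    have "V t - V s \<le> 0 * (t - s)"
    proof (rule DERIV_le_imp_diff_le[OF V st])
      fix r assume "s < r" "r < t"
      then show "V' r \<le> 0"
        using V'_le[of r] g_nonneg[of r] st by linarith
    qed
    then show ?thesis by simp
  qed
  obtain L where L: "(V \<longlongrightarrow> L) at_top" "\<And>t. 0 \<le> t \<Longrightarrow> L \<le> V t"
    using antitone_bounded_below_tendsto[of V B] anti V_bdd by blast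
  define d where "d = e / (2 * M)"
  have d: "0 < d" "M * d = e / 2"
    using e M by (simp_all add: d_def)
  have "\<forall>\<^sub>F t in at_top. V t < L + e / 2 * d"
    using order_tendstoD(2)[OF L(1)] e d by simp
  then obtain T where T: "\<And>t. T \<le> t \<Longrightarrow> V t < L + e / 2 * d"
    by (auto simp: eventually_at_top_linorder)
  obtain t where t: "T \<le> t" "0 \<le> t" "e \<le> g t"
  proof -
    from not_ev obtain t where "max T 0 \<le> t" "\<not> dist (g t) 0 < e"
      unfolding eventually_at_top_linorder by blast
    then show thesis
      using that g_nonneg[of t] by (auto simp: dist_real_def not_less)
  qed
  have g_large: "e / 2 \<le> g s" if "t \<le> s" "s \<le> t + d" for s
  proof -
    have "g t - g s \<le> M * (s - t)"
      using g_lip that t by simp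
    also have "\<dots> \<le> M * d"
      using M that by simp
    finally show ?thesis using d t by linarith
  qed
  have "V (t + d) - V t \<le> - (e / 2) * (t + d - t)"
  proof (rule DERIV_le_imp_diff_le[OF V])
    fix s assume "t < s" "s < t + d"
    then show "V' s \<le> - (e / 2)"
      using V'_le[of s] g_large[of s] t by simp
  qed (use t d in simp_all)
  then show False
    using T[of t] L(2)[of "t + d"] t d by simp
qed

lemma nonneg_not_eventually_DERIV_le_neg:
  fixes y y' :: "real \<Rightarrow> real"
  assumes y: "\<And>t. 0 \<le> t \<Longrightarrow> (y has_real_derivative y' t) (at t within {0..})"
    and nonneg: "\<And>t. 0 \<le> t \<Longrightarrow> 0 \<le> y t" and q: "0 < q"
  shows "\<not> (\<forall>\<^sub>F t in at_top. y' t \<le> - q)"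
proof
  assume "\<forall>\<^sub>F t in at_top. y' t \<le> - q"
  then obtain T where T: "\<And>t. T \<le> t \<Longrightarrow> y' t \<le> - q"
    by (auto simp: eventually_at_top_linorder)
  define a where "a = max T 0"
  define b where "b = a + (y a + 1) / q"
  have a: "0 \<le> a" "T \<le> a" and ab: "a \<le> b"
    using nonneg[of a] q by (auto simp: a_def b_def)
  have "y b - y a \<le> - q * (b - a)"
    by (rule DERIV_le_imp_diff_le[OF y a(1) ab]) (use T a in auto)
  moreover have "q * (b - a) = y a + 1"
    using q by (simp add: b_def)
  ultimately show False
    using nonneg[of b] a ab by linarith
qed

lemma tendsto_if_scaled_square_le:
  fixes f g :: "'a \<Rightarrow> real"
  assumes g: "(g \<longlongrightarrow> 0) F" and a: "0 < a" and le: "\<And>t. a * (f t - c)\<^sup>2 \<le> g t"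
  shows "(f \<longlongrightarrow> c) F"
proof -
  have "((\<lambda>t. (f t - c)\<^sup>2) \<longlongrightarrow> 0) F"
  proof (rule tendsto_sandwich[of "\<lambda>_. 0" _ _ "\<lambda>t. g t / a"])
    show "\<forall>\<^sub>F t in F. 0 \<le> (f t - c)\<^sup>2"
      by simp
    show "\<forall>\<^sub>F t in F. (f t - c)\<^sup>2 \<le> g t / a"
      using le a by (simp add: pos_le_divide_eq mult.commute)
    show "((\<lambda>t. g t / a) \<longlongrightarrow> 0) F"
      using tendsto_divide_zero[OF g] .
  qed simp
  then have "((\<lambda>t. sqrt ((f t - c)\<^sup>2)) \<longlongrightarrow> sqrt 0) F"
    by (intro tendsto_intros)
  then have "((\<lambda>t. f t - c) \<longlongrightarrow> 0) F"
    by (simp add: tendsto_rabs_zero_iff)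
  then show ?thesis
    by (simp add: Lim_null[symmetric])
qed

lemma dist_triple_le:
  fixes a b c a' b' c' :: real
  shows "dist (a, b, c) (a', b', c') \<le> \<bar>a - a'\<bar> + \<bar>b - b'\<bar> + \<bar>c - c'\<bar>"
proof -
  have "dist (a, b, c) (a', b', c') = norm (a - a', b - b', c - c')"
    by (simp only: dist_norm minus_prod_def fst_conv snd_conv)
  also have "\<dots> \<le> norm (a - a') + norm (b - b', c - c')"
    by (rule norm_Pair_le)
  also have "\<dots> \<le> norm (a - a') + (norm (b - b') + norm (c - c'))"
    using norm_Pair_le[of "b - b'" "c - c'"] by simp
  finally show ?thesis by simp
qed

locale three_species =
  fixes r1 r2 mu a12 a13 a21 a31 :: real
  assumes pos: "0 < r1" "0 < r2" "0 < mu" "0 < a12" "0 < a13" "0 < a21" "0 < a31"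
    and a12_less_r1: "a12 < r1"
    and mu_ge: "a31 * (r2 * (r1 - a12) / (r1 * r2 + a12 * a21)) \<le> mu"
begin

abbreviation prm :: params where
  "prm \<equiv> (r1, r2, mu, a12, a13, a21, a31)"

definition us :: real where
  "us = r2 * (r1 - a12) / (r1 * r2 + a12 * a21)"

definition vs :: real where
  "vs = (r1 * r2 + r1 * a21) / (r1 * r2 + a12 * a21)"

lemma us_pos: "0 < us" and vs_pos: "0 < vs"
  using pos a12_less_r1 by (simp_all add: us_def vs_def add_pos_pos)

lemma field_eq:
  "field prm (u, v, w) =
    (u * (r1 * (1 - u) - a12 * v - a13 * w), v * (r2 * (1 - v) + a21 * u), w * (a31 * u - mu))"
  by (simp add: field_def algebra_simps)

lemma equilibrium_u: "r1 * (1 - us) = a12 * vs"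
  and equilibrium_v: "r2 * (1 - vs) = - a21 * us"
proof -
  have "0 < r1 * r2 + a12 * a21"
    using pos by (simp add: add_pos_pos)
  then have "r1 * (1 - us) - a12 * vs = 0" "r2 * (1 - vs) + a21 * us = 0"
    unfolding us_def vs_def by (simp_all add: field_simps algebra_simps)
  then show "r1 * (1 - us) = a12 * vs" "r2 * (1 - vs) = - a21 * us"
    by simp_all
qed

lemma growth_u_deviation:
  "r1 * (1 - u) - a12 * v - a13 * w = - r1 * (u - us) - a12 * (v - vs) - a13 * w"
  using equilibrium_u by (simp add: algebra_simps)

lemma growth_v_deviation:
  "r2 * (1 - v) + a21 * u = - r2 * (v - vs) + a21 * (u - us)"
  using equilibrium_v by (simp add: algebra_simps)

lemma field_equilibrium: "field prm (us, vs, 0) = (0, 0, 0)"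
  unfolding field_eq growth_u_deviation growth_v_deviation by simp

(* The weights make the cross terms a12 (u - us) (v - vs) and a13 u w cancel in the derivative
   of lyap along the field. *)
definition c1 :: real where
  "c1 = a12 / a21"

definition c2 :: real where
  "c2 = a13 / a31"

definition k :: real where
  "k = c2 * mu - a13 * us"

lemma c1_pos: "0 < c1" and c2_pos: "0 < c2"
  using pos by (simp_all add: c1_def c2_def)

lemma k_nonneg: "0 \<le> k"
proof -
  have "a31 * us \<le> mu"
    using mu_ge by (simp add: us_def)
  then have "a13 * us \<le> a13 * (mu / a31)"
    using pos by (simp add: field_simps)
  then show ?thesis
    by (simp add: k_def c2_def)
qed

definition lyap :: "real \<times> real \<times> real \<Rightarrow> real" where
  "lyap = (\<lambda>(u, v, w). volterra us u + c1 * volterra vs v + c2 * w)"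

definition dissipation :: "real \<Rightarrow> real \<Rightarrow> real" where
  "dissipation u v = r1 * (u - us)\<^sup>2 + c1 * r2 * (v - vs)\<^sup>2"

lemma dissipation_nonneg: "0 \<le> dissipation u v"
  using pos c1_pos by (simp add: dissipation_def)

lemma lyap_derivative_along_field:
  assumes "0 < u" "0 < v"
  shows "(1 - us / u) * fst (field prm (u, v, w))
      + c1 * ((1 - vs / v) * fst (snd (field prm (u, v, w))))
      + c2 * snd (snd (field prm (u, v, w))) = - dissipation u v - k * w"
proof -
  have du: "(1 - us / u) * fst (field prm (u, v, w))
      = (u - us) * (- r1 * (u - us) - a12 * (v - vs) - a13 * w)"
    unfolding field_eq fst_conv growth_u_deviation using assms(1) by (simp add: field_simps)
  have dv: "(1 - vs / v) * fst (snd (field prm (u, v, w)))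
      = (v - vs) * (- r2 * (v - vs) + a21 * (u - us))"
    unfolding field_eq fst_conv snd_conv growth_v_deviation using assms(2) by (simp add: field_simps)
  have dw: "snd (snd (field prm (u, v, w))) = w * (a31 * u - mu)"
    by (simp add: field_eq)
  have "(u - us) * (- r1 * (u - us) - a12 * (v - vs) - a13 * w)
      + c1 * ((v - vs) * (- r2 * (v - vs) + a21 * (u - us))) + c2 * (w * (a31 * u - mu))
      = - dissipation u v - k * w
        + (c1 * a21 - a12) * (u - us) * (v - vs) + (c2 * a31 - a13) * u * w"
    by (simp add: dissipation_def k_def algebra_simps power2_eq_square)
  moreover have "c1 * a21 - a12 = 0" "c2 * a31 - a13 = 0"
    using pos by (simp_all add: c1_def c2_def)
  ultimately show ?thesis
    unfolding du dv dw by simp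
qed

definition dissipation_rate :: "real \<times> real \<times> real \<Rightarrow> real" where
  "dissipation_rate z =
    2 * r1 * (fst z - us) * (fst z * (r1 * (1 - fst z) - a12 * fst (snd z) - a13 * snd (snd z)))
    + 2 * c1 * r2 * (fst (snd z) - vs) * (fst (snd z) * (r2 * (1 - fst (snd z)) + a21 * fst z))"

lemma dissipation_rate_bounded:
  assumes "compact K"
  obtains M where "0 < M" "\<And>z. z \<in> K \<Longrightarrow> \<bar>dissipation_rate z\<bar> \<le> M"
proof -
  have "continuous_on K dissipation_rate"
    unfolding dissipation_rate_def by (intro continuous_intros)
  then have "bounded (dissipation_rate ` K)"
    using assms by (intro compact_imp_bounded compact_continuous_image)
  then show ?thesis
    using that unfolding bounded_pos by force
qed

lemma lyap_terms_le:
  assumes "0 < u" "0 < v" "0 \<le> w"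
  shows "volterra us u \<le> lyap (u, v, w)" "c1 * volterra vs v \<le> lyap (u, v, w)"
    "c2 * w \<le> lyap (u, v, w)"
  using assms volterra_nonneg[OF us_pos, of u] volterra_nonneg[OF vs_pos, of v] c1_pos c2_pos
  by (simp_all add: lyap_def)

lemma lyap_nonneg:
  assumes "0 < u" "0 < v" "0 \<le> w"
  shows "0 \<le> lyap (u, v, w)"
proof -
  have "0 \<le> c2 * w"
    using c2_pos assms(3) by simp
  then show ?thesis
    using lyap_terms_le(3)[OF assms] by linarith
qed

lemma lyap_equilibrium: "lyap (us, vs, 0) = 0"
  using us_pos vs_pos by (simp add: lyap_def volterra_self)

lemma isCont_lyap: "isCont lyap (us, vs, 0)"
proof -
  have lyap_eq: "lyap = (\<lambda>z. volterra us (fst z) + c1 * volterra vs (fst (snd z)) + c2 * snd (snd z))"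
    by (simp add: lyap_def case_prod_beta')
  show ?thesis
    unfolding lyap_eq
    using us_pos vs_pos by (intro isCont_volterra continuous_intros) simp_all
qed

lemma lyap_sublevel_bounded:
  assumes "0 < u" "0 < v" "0 \<le> w" "lyap (u, v, w) \<le> C"
  shows "(u, v, w) \<in> {0..2 * us + 2 * C} \<times> {0..2 * vs + 2 * C / c1} \<times> {0..C / c2}"
proof -
  have "u \<le> 2 * us + 2 * C"
    using le_volterra_linear[OF us_pos assms(1)] lyap_terms_le(1)[OF assms(1-3)] assms(4) by linarith
  moreover have "volterra vs v \<le> C / c1"
    using lyap_terms_le(2)[OF assms(1-3)] assms(4) c1_pos by (simp add: field_simps)
  then have "v \<le> 2 * vs + 2 * C / c1"
    using le_volterra_linear[OF vs_pos assms(2)] by linarith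
  moreover have "w \<le> C / c2"
    using lyap_terms_le(3)[OF assms(1-3)] assms(4) c2_pos by (simp add: field_simps)
  ultimately show ?thesis
    using assms by auto
qed

lemma lyap_small_imp_near:
  assumes "0 < \<epsilon>"
  obtains m where "0 < m" "\<And>u v w. 0 < u \<Longrightarrow> 0 < v \<Longrightarrow> 0 \<le> w \<Longrightarrow> lyap (u, v, w) < m
    \<Longrightarrow> dist (u, v, w) (us, vs, 0) < \<epsilon>"
proof -
  obtain m1 where m1: "0 < m1" "\<And>u. 0 < u \<Longrightarrow> volterra us u < m1 \<Longrightarrow> \<bar>u - us\<bar> < \<epsilon> / 3"
    using volterra_small_imp_near[OF us_pos, of "\<epsilon> / 3"] assms by auto
  obtain m2 where m2: "0 < m2" "\<And>v. 0 < v \<Longrightarrow> volterra vs v < m2 \<Longrightarrow> \<bar>v - vs\<bar> < \<epsilon> / 3"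
    using volterra_small_imp_near[OF vs_pos, of "\<epsilon> / 3"] assms by auto
  show ?thesis
  proof (rule that)
    show "0 < min m1 (min (c1 * m2) (c2 * (\<epsilon> / 3)))"
      using m1 m2 c1_pos c2_pos assms by simp
    fix u v w assume uvw: "0 < u" "0 < v" "0 \<le> w"
      and small: "lyap (u, v, w) < min m1 (min (c1 * m2) (c2 * (\<epsilon> / 3)))"
    have "\<bar>u - us\<bar> < \<epsilon> / 3"
      using m1(2)[OF uvw(1)] lyap_terms_le(1)[OF uvw] small by linarith
    moreover have "c1 * volterra vs v < c1 * m2"
      using lyap_terms_le(2)[OF uvw] small by linarith
    then have "\<bar>v - vs\<bar> < \<epsilon> / 3"
      using m2(2)[OF uvw(2)] c1_pos by simp
    moreover have "c2 * w < c2 * (\<epsilon> / 3)"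
      using lyap_terms_le(3)[OF uvw] small by linarith
    then have "\<bar>w - 0\<bar> < \<epsilon> / 3"
      using c2_pos uvw(3) by simp
    ultimately show "dist (u, v, w) (us, vs, 0) < \<epsilon>"
      using dist_triple_le[of u v w us vs 0] by linarith
  qed
qed

end

locale three_species_solution = three_species +
  fixes x :: "real \<Rightarrow> real \<times> real \<times> real"
  assumes solution: "is_solution prm x"
    and initial: "0 < fst (x 0)" "0 < fst (snd (x 0))" "0 \<le> snd (snd (x 0))"
begin

definition u :: "real \<Rightarrow> real" where
  "u t = fst (x t)"

definition v :: "real \<Rightarrow> real" where
  "v t = fst (snd (x t))"

definition w :: "real \<Rightarrow> real" where
  "w t = snd (snd (x t))"

lemma x_eq: "x t = (u t, v t, w t)"
  by (simp add: u_def v_def w_def)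

lemma has_real_derivative_uvw:
  assumes "0 \<le> t"
  shows "(u has_real_derivative u t * (r1 * (1 - u t) - a12 * v t - a13 * w t)) (at t within {0..})"
    and "(v has_real_derivative v t * (r2 * (1 - v t) + a21 * u t)) (at t within {0..})"
    and "(w has_real_derivative w t * (a31 * u t - mu)) (at t within {0..})"
proof -
  have "(x has_vector_derivative field prm (u t, v t, w t)) (at t within {0..})"
    using solution assms unfolding is_solution_def x_eq[symmetric] by simp
  note components = has_vector_derivative_components[OF this[unfolded field_eq]]
  show "(u has_real_derivative u t * (r1 * (1 - u t) - a12 * v t - a13 * w t)) (at t within {0..})"
    using components(1) by (simp add: u_def[abs_def] v_def w_def)
  show "(v has_real_derivative v t * (r2 * (1 - v t) + a21 * u t)) (at t within {0..})"
    using components(2) by (simp add: u_def v_def[abs_def] w_def)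
  show "(w has_real_derivative w t * (a31 * u t - mu)) (at t within {0..})"
    using components(3) by (simp add: u_def v_def w_def[abs_def])
qed

lemma continuous_on_uvw:
  "continuous_on {0..} u" "continuous_on {0..} v" "continuous_on {0..} w"
  by (rule continuous_on_Ici_if_DERIV, erule has_real_derivative_uvw)+

lemma u_pos: "0 \<le> t \<Longrightarrow> 0 < u t"
  and v_pos: "0 \<le> t \<Longrightarrow> 0 < v t"
  and w_nonneg: "0 \<le> t \<Longrightarrow> 0 \<le> w t"
proof -
  assume t: "0 \<le> t"
  have "u t = u 0 * exp (integral {0..t} (\<lambda>s. r1 * (1 - u s) - a12 * v s - a13 * w s))"
    using has_real_derivative_uvw(1) continuous_on_uvw t
    by (intro linear_ode_solution) (auto intro!: continuous_intros)
  then show "0 < u t"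
    using initial by (simp add: u_def)
  have "v t = v 0 * exp (integral {0..t} (\<lambda>s. r2 * (1 - v s) + a21 * u s))"
    using has_real_derivative_uvw(2) continuous_on_uvw t
    by (intro linear_ode_solution) (auto intro!: continuous_intros)
  then show "0 < v t"
    using initial by (simp add: v_def)
  have "w t = w 0 * exp (integral {0..t} (\<lambda>s. a31 * u s - mu))"
    using has_real_derivative_uvw(3) continuous_on_uvw t
    by (intro linear_ode_solution) (auto intro!: continuous_intros)
  then show "0 \<le> w t"
    using initial by (simp add: w_def)
qed

definition V :: "real \<Rightarrow> real" where
  "V t = lyap (x t)"

lemma has_real_derivative_V:
  assumes t: "0 \<le> t"
  shows "(V has_real_derivative - dissipation (u t) (v t) - k * w t) (at t within {0..})"
proof -
  have "V = (\<lambda>t. volterra us (u t) + c1 * volterra vs (v t) + c2 * w t)"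
    by (simp add: fun_eq_iff V_def x_eq lyap_def)
  moreover have "((\<lambda>t. volterra us (u t) + c1 * volterra vs (v t) + c2 * w t) has_real_derivative
      (1 - us / u t) * fst (field prm (u t, v t, w t))
      + c1 * ((1 - vs / v t) * fst (snd (field prm (u t, v t, w t))))
      + c2 * snd (snd (field prm (u t, v t, w t)))) (at t within {0..})"
    unfolding field_eq fst_conv snd_conv
    using has_real_derivative_uvw[OF t] us_pos vs_pos u_pos[OF t] v_pos[OF t]
    by (intro DERIV_add DERIV_cmult has_real_derivative_volterra)
  ultimately show ?thesis
    using lyap_derivative_along_field[OF u_pos[OF t] v_pos[OF t]] by simp
qed

lemma V_antitone:
  assumes st: "0 \<le> s" "s \<le> t"
  shows "V t \<le> V s"
proof -
  have "V t - V s \<le> 0 * (t - s)"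
  proof (rule DERIV_le_imp_diff_le[OF has_real_derivative_V st])
    fix r assume "s < r" "r < t"
    then have "0 \<le> k * w r"
      using k_nonneg w_nonneg[of r] st by simp
    then show "- dissipation (u r) (v r) - k * w r \<le> 0"
      using dissipation_nonneg[of "u r" "v r"] by linarith
  qed
  then show ?thesis
    by simp
qed

lemma V_nonneg:
  assumes "0 \<le> t" shows "0 \<le> V t"
  using lyap_nonneg[OF u_pos v_pos w_nonneg] assms by (simp add: V_def x_eq)

lemma trajectory_bounded:
  assumes "0 \<le> t"
  shows "x t \<in> {0..2 * us + 2 * V 0} \<times> {0..2 * vs + 2 * V 0 / c1} \<times> {0..V 0 / c2}"
proof -
  have "lyap (u t, v t, w t) \<le> V 0"
    using V_antitone[of 0 t] assms by (simp add: V_def x_eq)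
  then show ?thesis
    using lyap_sublevel_bounded[OF u_pos v_pos w_nonneg] assms by (simp add: x_eq)
qed

lemma has_real_derivative_dissipation:
  assumes "0 \<le> t"
  shows "((\<lambda>t. dissipation (u t) (v t)) has_real_derivative dissipation_rate (x t)) (at t within {0..})"
proof -
  note du = has_real_derivative_uvw(1)[OF assms] and dv = has_real_derivative_uvw(2)[OF assms]
  have "((\<lambda>t. r1 * (u t - us)\<^sup>2 + c1 * r2 * (v t - vs)\<^sup>2) has_real_derivative
      r1 * (2 * (u t - us) * (u t * (r1 * (1 - u t) - a12 * v t - a13 * w t)))
      + c1 * r2 * (2 * (v t - vs) * (v t * (r2 * (1 - v t) + a21 * u t)))) (at t within {0..})"
    by (rule derivative_eq_intros refl du dv | simp add: algebra_simps)+
  then show ?thesis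
    by (simp add: dissipation_def dissipation_rate_def x_eq algebra_simps)
qed

lemma dissipation_lipschitz:
  obtains M where "0 < M"
    "\<And>s t. 0 \<le> s \<Longrightarrow> s \<le> t \<Longrightarrow> dissipation (u s) (v s) - dissipation (u t) (v t) \<le> M * (t - s)"
proof -
  define K where "K = {0..2 * us + 2 * V 0} \<times> {0..2 * vs + 2 * V 0 / c1} \<times> {0..V 0 / c2}"
  have "compact K"
    unfolding K_def by (intro compact_Times compact_Icc)
  then obtain M where M: "0 < M" "\<And>z. z \<in> K \<Longrightarrow> \<bar>dissipation_rate z\<bar> \<le> M"
    using dissipation_rate_bounded by blast
  show ?thesis
  proof (rule that[OF M(1)])
    fix s t :: real assume st: "0 \<le> s" "s \<le> t"
    have "- dissipation (u t) (v t) - - dissipation (u s) (v s) \<le> M * (t - s)"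
    proof (rule DERIV_le_imp_diff_le[OF DERIV_minus[OF has_real_derivative_dissipation] st])
      fix r assume "s < r" "r < t"
      then have "x r \<in> K"
        unfolding K_def using trajectory_bounded st by simp
      from M(2)[OF this] show "- dissipation_rate (x r) \<le> M"
        by linarith
    qed
    then show "dissipation (u s) (v s) - dissipation (u t) (v t) \<le> M * (t - s)"
      by simp
  qed
qed

lemma dissipation_tendsto_zero: "((\<lambda>t. dissipation (u t) (v t)) \<longlongrightarrow> 0) at_top"
proof -
  obtain M where M: "0 < M"
    "\<And>s t. 0 \<le> s \<Longrightarrow> s \<le> t \<Longrightarrow> dissipation (u s) (v s) - dissipation (u t) (v t) \<le> M * (t - s)"
    using dissipation_lipschitz by blast
  show ?thesis
  proof (rule lyapunov_dissipation_tendsto_zero[OF has_real_derivative_V])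
    show "- dissipation (u t) (v t) - k * w t \<le> - dissipation (u t) (v t)" if "0 < t" for t
      using k_nonneg w_nonneg[of t] that by simp
    show "0 \<le> V t" if "0 \<le> t" for t
      using V_nonneg that .
    show "0 \<le> dissipation (u t) (v t)" for t
      by (rule dissipation_nonneg)
    show "dissipation (u s) (v s) - dissipation (u t) (v t) \<le> M * (t - s)"
      if "0 \<le> s" "s \<le> t" for s t
      using M(2) that .
  qed (use M(1) in simp_all)
qed

lemma u_tendsto: "(u \<longlongrightarrow> us) at_top"
proof (rule tendsto_if_scaled_square_le[OF dissipation_tendsto_zero pos(1)])
  fix t
  have "0 \<le> c1 * r2 * (v t - vs)\<^sup>2"
    using pos c1_pos by simp
  then show "r1 * (u t - us)\<^sup>2 \<le> dissipation (u t) (v t)"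
    by (simp add: dissipation_def)
qed

lemma v_tendsto: "(v \<longlongrightarrow> vs) at_top"
proof (rule tendsto_if_scaled_square_le[OF dissipation_tendsto_zero])
  show "0 < c1 * r2"
    using pos c1_pos by simp
  fix t
  have "0 \<le> r1 * (u t - us)\<^sup>2"
    using pos by simp
  then show "c1 * r2 * (v t - vs)\<^sup>2 \<le> dissipation (u t) (v t)"
    by (simp add: dissipation_def)
qed

lemma w_tendsto_lyap_limit:
  obtains L where "0 \<le> L" "(w \<longlongrightarrow> L / c2) at_top"
proof -
  obtain L where L: "(V \<longlongrightarrow> L) at_top" "\<And>t. 0 \<le> t \<Longrightarrow> L \<le> V t"
    using antitone_bounded_below_tendsto[of V 0] V_antitone V_nonneg by blast
  have "\<forall>\<^sub>F t in at_top. 0 \<le> V t"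
    using eventually_ge_at_top[of "0::real"] by eventually_elim (rule V_nonneg)
  then have "0 \<le> L"
    using tendsto_lowerbound[OF L(1)] by simp
  have "((\<lambda>t. (V t - volterra us (u t) - c1 * volterra vs (v t)) / c2) \<longlongrightarrow>
      (L - volterra us us - c1 * volterra vs vs) / c2) at_top"
    unfolding volterra_def using us_pos vs_pos c2_pos
    by (intro tendsto_intros L(1) u_tendsto v_tendsto) auto
  moreover have "(\<lambda>t. (V t - volterra us (u t) - c1 * volterra vs (v t)) / c2) = w"
    using c2_pos by (simp add: fun_eq_iff V_def x_eq lyap_def)
  ultimately have "(w \<longlongrightarrow> L / c2) at_top"
    using us_pos vs_pos by (simp add: volterra_self)
  with \<open>0 \<le> L\<close> show ?thesis
    by (rule that)
qed

lemma w_tendsto: "(w \<longlongrightarrow> 0) at_top"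
proof -
  obtain L where L: "0 \<le> L" "(w \<longlongrightarrow> L / c2) at_top"
    using w_tendsto_lyap_limit by blast
  have u_nonneg: "0 \<le> u t" if "0 \<le> t" for t
    using u_pos[OF that] by simp
  have "L = 0"
  proof (rule ccontr)
    assume "L \<noteq> 0"
    define q where "q = us * a13 * (L / c2) / 2"
    have q: "0 < q"
      using \<open>L \<noteq> 0\<close> L(1) us_pos pos c2_pos by (simp add: q_def)
    have "((\<lambda>t. u t * (- r1 * (u t - us) - a12 * (v t - vs) - a13 * w t)) \<longlongrightarrow>
        us * (- r1 * (us - us) - a12 * (vs - vs) - a13 * (L / c2))) at_top"
      by (intro tendsto_intros u_tendsto v_tendsto L(2))
    moreover have "us * (- r1 * (us - us) - a12 * (vs - vs) - a13 * (L / c2)) = - 2 * q"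
      by (simp add: q_def)
    then have "us * (- r1 * (us - us) - a12 * (vs - vs) - a13 * (L / c2)) < - q"
      using q by linarith
    ultimately have "\<forall>\<^sub>F t in at_top. u t * (- r1 * (u t - us) - a12 * (v t - vs) - a13 * w t) < - q"
      by (rule order_tendstoD(2))
    then have "\<forall>\<^sub>F t in at_top. u t * (- r1 * (u t - us) - a12 * (v t - vs) - a13 * w t) \<le> - q"
      by (rule eventually_mono) simp
    moreover have "\<not> (\<forall>\<^sub>F t in at_top. u t * (- r1 * (u t - us) - a12 * (v t - vs) - a13 * w t) \<le> - q)"
      using nonneg_not_eventually_DERIV_le_neg[OF has_real_derivative_uvw(1)[unfolded growth_u_deviation] u_nonneg q]
      by simp
    ultimately show False
      by contradiction
  qed
  then show ?thesis
    using L(2) by simp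
qed

lemma x_tendsto: "(x \<longlongrightarrow> (us, vs, 0)) at_top"
proof -
  have "((\<lambda>t. (u t, v t, w t)) \<longlongrightarrow> (us, vs, 0)) at_top"
    by (intro tendsto_Pair u_tendsto v_tendsto w_tendsto)
  moreover have "(\<lambda>t. (u t, v t, w t)) = x"
    by (simp add: fun_eq_iff x_eq)
  ultimately show ?thesis
    by simp
qed

end

context three_species
begin

lemma three_species_solutionI:
  assumes "is_solution prm x" "0 < fst (x 0)" "0 < fst (snd (x 0))" "0 \<le> snd (snd (x 0))"
  shows "three_species_solution r1 r2 mu a12 a13 a21 a31 x"
  using assms three_species_axioms
  by (simp add: three_species_solution_def three_species_solution_axioms_def)

lemma equilibrium_stable: "stable prm (us, vs, 0)"
  unfolding stable_def
proof (intro allI impI)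
  fix \<epsilon> :: real assume \<epsilon>: "0 < \<epsilon>"
  obtain m where m: "0 < m" "\<And>u v w. 0 < u \<Longrightarrow> 0 < v \<Longrightarrow> 0 \<le> w \<Longrightarrow> lyap (u, v, w) < m
      \<Longrightarrow> dist (u, v, w) (us, vs, 0) < \<epsilon>"
    using lyap_small_imp_near[OF \<epsilon>] by blast
  obtain \<delta> where \<delta>: "0 < \<delta>" "\<And>z. dist z (us, vs, 0) < \<delta> \<Longrightarrow> lyap z < m"
    using isCont_lyap m(1) lyap_equilibrium
    unfolding continuous_at_eps_delta by (force simp: dist_real_def)
  show "\<exists>\<delta>>0. \<forall>x. is_solution prm x \<and> x 0 \<in> nonneg_orthant \<and> dist (x 0) (us, vs, 0) < \<delta>
      \<longrightarrow> (\<forall>t\<ge>0. dist (x t) (us, vs, 0) < \<epsilon>)"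
  proof (intro exI[of _ "min \<delta> (min us vs)"] conjI allI impI)
    show "0 < min \<delta> (min us vs)"
      using \<delta>(1) us_pos vs_pos by simp
    fix x and t :: real
    assume x: "is_solution prm x \<and> x 0 \<in> nonneg_orthant \<and> dist (x 0) (us, vs, 0) < min \<delta> (min us vs)"
      and t: "0 \<le> t"
    have "\<bar>fst (x 0) - us\<bar> < us" "\<bar>fst (snd (x 0)) - vs\<bar> < vs"
      using x dist_fst_le[of "x 0" "(us, vs, 0)"] dist_snd_le[of "x 0" "(us, vs, 0)"]
        dist_fst_le[of "snd (x 0)" "(vs, 0)"]
      by (simp_all add: dist_real_def)
    then interpret S: three_species_solution r1 r2 mu a12 a13 a21 a31 x
      using x by (intro three_species_solutionI) (auto simp: nonneg_orthant_def split: prod.splits)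
    have "lyap (x t) \<le> lyap (x 0)"
      using S.V_antitone[OF order_refl t] by (simp add: S.V_def)
    also have "\<dots> < m"
      using \<delta>(2) x by simp
    finally show "dist (x t) (us, vs, 0) < \<epsilon>"
      using m(2)[OF S.u_pos[OF t] S.v_pos[OF t] S.w_nonneg[OF t]] by (simp add: S.x_eq)
  qed
qed

lemma equilibrium_globally_asymptotically_stable:
  "globally_asymptotically_stable prm (us, vs, 0)"
  unfolding globally_asymptotically_stable_def
  using equilibrium_stable three_species_solution.x_tendsto[OF three_species_solutionI] by blast

end

theorem theorem1:
  fixes r1 r2 mu a12 a13 a21 a31 :: real
  assumes "r1 > 0" "r2 > 0" "mu > 0" "a12 > 0" "a13 > 0" "a21 > 0" "a31 > 0"
    and "r1 > a12"
    and "mu \<ge> a31 * (r2 * (r1 - a12) / (r1 * r2 + a12 * a21))"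
  shows "let us = r2 * (r1 - a12) / (r1 * r2 + a12 * a21);
             vs = (r1 * r2 + r1 * a21) / (r1 * r2 + a12 * a21);
             p = (r1, r2, mu, a12, a13, a21, a31)
         in us > 0 \<and> vs > 0 \<and> field p (us, vs, 0) = (0, 0, 0) \<and>
            globally_asymptotically_stable p (us, vs, 0)"
proof -
  interpret three_species r1 r2 mu a12 a13 a21 a31
    using assms by unfold_locales
  show ?thesis
    unfolding Let_def us_def[symmetric] vs_def[symmetric]
    using us_pos vs_pos field_equilibrium equilibrium_globally_asymptotically_stable by blast
qed

end
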